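(* Let $G$ be a nonabelian group and let $\psi,\psi'\in\operatorname{End}(G)$ satisfy $\psi([G,G])\le Z(G)$, $\psi'([G,G])\le Z(G)$, and $[\psi(G),\psi'(G)]\subseteq Z(G)$. For $\alpha,\beta\in\mathscr{E}$ define binary operations on $G$ by \[g\circ_\alpha h=g\,\psi_\alpha(g)\,h\,\psi_\alpha(g)^{-1},\qquad g\star_\beta h=g\,\psi'_\beta(g)\,h\,\psi'_\beta(g)^{-1},\] where $\psi_\alpha=\psi\circ\alpha$ and $\psi'_\beta=\psi'\circ\beta$. Then $(G,\circ_\alpha,\star_\beta)$ is a skew left brace.
   Context: $Z(G)$ is the center and $[G,G]$ the commutator subgroup; $[\psi(G),\psi'(G)]$ is the subgroup generated by commutators $xyx^{-1}y^{-1}$ with $x\in\psi(G)$, $y\in\psi'(G)$. $\mathscr{E}$ denotes the set of formal expressions $\alpha=n_1\phi_1+\cdots+n_t\phi_t$ with $t\ge0$, $n_i\in\mathbb Z$, $\phi_i\in\operatorname{End}(G)$ (the free group on $\operatorname{End}(G)$, written additively), acting on $G$ by $\alpha(g)=\phi_1(g^{n_1})\cdots\phi_t(g^{n_t})$. A skew left brace is a triple $(B,\cdot,\circ)$ where $(B,\cdot)$ and $(B,\circ)$ are groups and $a\circ(b\cdot c)=(a\circ b)\cdot a^{-1}\cdot(a\circ c)$ for all $a,b,c\in B$, where $a^{-1}$ is the inverse of $a$ in $(B,\cdot)$. Here $(G,\circ_\alpha)$ plays the role of $(B,\cdot)$ and $(G,\star_\beta)$ the role of $(B,\circ)$. *)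

theory Defs
  imports "HOL-Algebra.Algebra"
begin

definition group_center :: "('a, 'b) monoid_scheme \<Rightarrow> 'a set" where
  "group_center G = {z \<in> carrier G. \<forall>g \<in> carrier G. z \<otimes>\<^bsub>G\<^esub> g = g \<otimes>\<^bsub>G\<^esub> z}"

definition commutator_subgroup :: "('a, 'b) monoid_scheme \<Rightarrow> 'a set \<Rightarrow> 'a set \<Rightarrow> 'a set" where
  "commutator_subgroup G A B = generate G
     {x \<otimes>\<^bsub>G\<^esub> y \<otimes>\<^bsub>G\<^esub> inv\<^bsub>G\<^esub> x \<otimes>\<^bsub>G\<^esub> inv\<^bsub>G\<^esub> y | x y. x \<in> A \<and> y \<in> B}"

text \<open>Formal expressions n_1 phi_1 + ... + n_t phi_t in the free group on End(G),
  represented as lists of pairs (n_i, phi_i); valid if every phi_i is an endomorphism.\<close>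
definition formal_expr :: "('a, 'b) monoid_scheme \<Rightarrow> (int \<times> ('a \<Rightarrow> 'a)) list \<Rightarrow> bool" where
  "formal_expr G al \<longleftrightarrow> (\<forall>p \<in> set al. snd p \<in> hom G G)"

fun expr_action :: "('a, 'b) monoid_scheme \<Rightarrow> (int \<times> ('a \<Rightarrow> 'a)) list \<Rightarrow> 'a \<Rightarrow> 'a" where
  "expr_action G [] g = \<one>\<^bsub>G\<^esub>"
| "expr_action G ((n, \<phi>) # al) g = \<phi> (g [^]\<^bsub>G\<^esub> n) \<otimes>\<^bsub>G\<^esub> expr_action G al g"

definition twisted_op :: "('a, 'b) monoid_scheme \<Rightarrow> ('a \<Rightarrow> 'a) \<Rightarrow> 'a \<Rightarrow> 'a \<Rightarrow> 'a" where
  "twisted_op G f g h = g \<otimes>\<^bsub>G\<^esub> f g \<otimes>\<^bsub>G\<^esub> h \<otimes>\<^bsub>G\<^esub> inv\<^bsub>G\<^esub> (f g)"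

definition skew_left_brace :: "'a set \<Rightarrow> ('a \<Rightarrow> 'a \<Rightarrow> 'a) \<Rightarrow> ('a \<Rightarrow> 'a \<Rightarrow> 'a) \<Rightarrow> bool" where
  "skew_left_brace B dot circ \<longleftrightarrow>
     (\<exists>e e'. group \<lparr>carrier = B, monoid.mult = dot, one = e\<rparr> \<and>
             group \<lparr>carrier = B, monoid.mult = circ, one = e'\<rparr> \<and>
             (\<forall>a \<in> B. \<forall>b \<in> B. \<forall>c \<in> B.
                circ a (dot b c) =
                dot (dot (circ a b) (inv\<^bsub>\<lparr>carrier = B, monoid.mult = dot, one = e\<rparr>\<^esub> a)) (circ a c)))"

end

theory Submission
  imports Defs
begin

(*
  Write c_a for conjugation by a, so that g o_f h = g c_{f g}(h).  Since c_a depends only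
  on the class of a modulo the centre, everything is governed by the map P = p o f into a
  group Q, where p : G -> Q is any homomorphism with central kernel (in the end the quotient
  map onto G/Z(G)).  The hypotheses on psi make P = p o psi o alpha a homomorphism with abelian
  image; such a P is invariant under conjugation, hence P(g o_f h) = P(g) P(h), and from this
  associativity and inverses of o_f follow.  For two such twists f and k the brace identity
  comes down to c_{f b} c_{k a} = c_{k a} c_{f b}, which holds because p(f b) and p(k a)
  commute by the hypothesis on [psi(G), psi'(G)].
*)

definition conjugate :: "('a, 'b) monoid_scheme \<Rightarrow> 'a \<Rightarrow> 'a \<Rightarrow> 'a" where
  "conjugate G a x = a \<otimes>\<^bsub>G\<^esub> x \<otimes>\<^bsub>G\<^esub> inv\<^bsub>G\<^esub> a"

context group
begin

lemma conjugate_closed [simp]: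
  "a \<in> carrier G \<Longrightarrow> x \<in> carrier G \<Longrightarrow> conjugate G a x \<in> carrier G"
  by (simp add: conjugate_def)

lemma conjugate_one [simp]: "x \<in> carrier G \<Longrightarrow> conjugate G \<one> x = x"
  by (simp add: conjugate_def)

lemma conjugate_mult:
  "a \<in> carrier G \<Longrightarrow> b \<in> carrier G \<Longrightarrow> x \<in> carrier G \<Longrightarrow>
    conjugate G (a \<otimes> b) x = conjugate G a (conjugate G b x)"
  by (simp add: conjugate_def m_assoc inv_mult_group)

lemma conjugate_distrib:
  "a \<in> carrier G \<Longrightarrow> x \<in> carrier G \<Longrightarrow> y \<in> carrier G \<Longrightarrow>
    conjugate G a (x \<otimes> y) = conjugate G a x \<otimes> conjugate G a y"
  by (simp add: conjugate_def m_assoc) (simp add: m_assoc [symmetric])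

lemma conjugate_inv:
  "a \<in> carrier G \<Longrightarrow> x \<in> carrier G \<Longrightarrow> conjugate G a (inv x) = inv (conjugate G a x)"
  by (simp add: conjugate_def m_assoc inv_mult_group)

lemma conjugate_conjugate_inv:
  "a \<in> carrier G \<Longrightarrow> x \<in> carrier G \<Longrightarrow> conjugate G a (conjugate G (inv a) x) = x"
  by (simp add: conjugate_def m_assoc) (simp add: m_assoc [symmetric])

lemma conjugate_central:
  assumes "z \<in> group_center G" "x \<in> carrier G"
  shows "conjugate G z x = x"
  using assms by (simp add: conjugate_def group_center_def m_assoc)

lemma twisted_op_conjugate:
  "g \<in> carrier G \<Longrightarrow> f g \<in> carrier G \<Longrightarrow> h \<in> carrier G \<Longrightarrow>
    twisted_op G f g h = g \<otimes> conjugate G (f g) h"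
  by (simp add: twisted_op_def conjugate_def m_assoc)

end

lemma (in group) subgroup_group_center: "subgroup (group_center G) G"
proof (rule subgroupI)
  fix h assume h: "h \<in> group_center G"
  then have h_carrier: "h \<in> carrier G" and comm: "\<And>g. g \<in> carrier G \<Longrightarrow> h \<otimes> g = g \<otimes> h"
    by (auto simp: group_center_def)
  have "inv h \<otimes> g = g \<otimes> inv h" if g: "g \<in> carrier G" for g
  proof -
    have "inv h \<otimes> g = inv h \<otimes> (g \<otimes> h) \<otimes> inv h"
      using g h_carrier by (simp add: m_assoc)
    also have "\<dots> = g \<otimes> inv h"
      using g h_carrier by (simp add: comm [symmetric] m_assoc [symmetric])
    finally show ?thesis .
  qed
  then show "inv h \<in> group_center G"
    using h_carrier by (simp add: group_center_def)
next
  fix h k assume "h \<in> group_center G" "k \<in> group_center G"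
  then have carrier: "h \<in> carrier G" "k \<in> carrier G"
    and comm: "\<And>g. g \<in> carrier G \<Longrightarrow> h \<otimes> g = g \<otimes> h" "\<And>g. g \<in> carrier G \<Longrightarrow> k \<otimes> g = g \<otimes> k"
    by (auto simp: group_center_def)
  have "h \<otimes> k \<otimes> g = g \<otimes> (h \<otimes> k)" if g: "g \<in> carrier G" for g
  proof -
    have "h \<otimes> k \<otimes> g = h \<otimes> g \<otimes> k"
      using g carrier by (simp add: m_assoc comm(2))
    also have "\<dots> = g \<otimes> (h \<otimes> k)"
      using g carrier by (simp add: m_assoc comm(1))
    finally show ?thesis .
  qed
  then show "h \<otimes> k \<in> group_center G"
    using carrier by (simp add: group_center_def)
qed (auto simp: group_center_def)

lemma (in group) normal_group_center: "group_center G \<lhd> G"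
  unfolding normal_inv_iff
proof (intro conjI ballI subgroup_group_center)
  fix x h assume x: "x \<in> carrier G" and h: "h \<in> group_center G"
  then have "x \<otimes> h \<otimes> inv x = h \<otimes> x \<otimes> inv x"
    by (simp add: group_center_def)
  also have "\<dots> = h"
    using x h by (simp add: m_assoc subgroup.mem_carrier [OF subgroup_group_center])
  finally show "x \<otimes> h \<otimes> inv x \<in> group_center G"
    using h by simp
qed

lemma (in normal) kernel_r_coset_hom_Mod: "kernel G (G Mod H) (\<lambda>a. H #> a) = H"
  using coset_join1 [OF _ _ subgroup_axioms] coset_join2 [OF _ subgroup_axioms] subset
  by (auto simp: kernel_def)

lemma (in group) hom_pointwise_mult:
  assumes F1: "F1 \<in> hom K G" and F2: "F2 \<in> hom K G"
    and comm: "\<And>x y. x \<in> carrier K \<Longrightarrow> y \<in> carrier K \<Longrightarrow> F1 x \<otimes> F2 y = F2 y \<otimes> F1 x"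
  shows "(\<lambda>x. F1 x \<otimes> F2 x) \<in> hom K G"
proof (rule homI)
  fix x y assume xy: "x \<in> carrier K" "y \<in> carrier K"
  then have closed: "F1 x \<in> carrier G" "F1 y \<in> carrier G" "F2 x \<in> carrier G" "F2 y \<in> carrier G"
    using F1 F2 by (simp_all add: hom_in_carrier)
  have "F1 (x \<otimes>\<^bsub>K\<^esub> y) \<otimes> F2 (x \<otimes>\<^bsub>K\<^esub> y) = F1 x \<otimes> (F1 y \<otimes> F2 x) \<otimes> F2 y"
    using xy F1 F2 closed by (simp add: hom_mult m_assoc)
  also have "\<dots> = F1 x \<otimes> (F2 x \<otimes> F1 y) \<otimes> F2 y"
    using xy by (simp add: comm)
  also have "\<dots> = F1 x \<otimes> F2 x \<otimes> (F1 y \<otimes> F2 y)"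
    using closed by (simp add: m_assoc)
  finally show "F1 (x \<otimes>\<^bsub>K\<^esub> y) \<otimes> F2 (x \<otimes>\<^bsub>K\<^esub> y) = F1 x \<otimes> F2 x \<otimes> (F1 y \<otimes> F2 y)" .
qed (use F1 F2 in \<open>simp add: hom_in_carrier\<close>)

lemma (in group) hom_comp_int_pow:
  assumes K: "group K" and F: "F \<in> hom K G"
    and comm: "\<And>x y. x \<in> carrier K \<Longrightarrow> y \<in> carrier K \<Longrightarrow> F x \<otimes> F y = F y \<otimes> F x"
  shows "(\<lambda>x. F (x [^]\<^bsub>K\<^esub> (n::int))) \<in> hom K G"
proof (rule homI)
  fix x y assume xy: "x \<in> carrier K" "y \<in> carrier K"
  have "x \<otimes>\<^bsub>K\<^esub> y \<in> carrier K"
    using K xy by (simp add: group.is_monoid monoid.m_closed)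
  then have "F ((x \<otimes>\<^bsub>K\<^esub> y) [^]\<^bsub>K\<^esub> n) = (F x \<otimes> F y) [^] n"
    using xy by (simp add: hom_int_pow [OF F _ K is_group] hom_mult [OF F])
  also have "\<dots> = F x [^] n \<otimes> F y [^] n"
    using xy F by (simp add: int_pow_mult_distrib comm hom_in_carrier)
  also have "\<dots> = F (x [^]\<^bsub>K\<^esub> n) \<otimes> F (y [^]\<^bsub>K\<^esub> n)"
    using xy K by (simp add: hom_int_pow [OF F _ K is_group] group.int_pow_closed)
  finally show "F ((x \<otimes>\<^bsub>K\<^esub> y) [^]\<^bsub>K\<^esub> n) = F (x [^]\<^bsub>K\<^esub> n) \<otimes> F (y [^]\<^bsub>K\<^esub> n)" .
qed (use F K in \<open>simp add: hom_in_carrier group.int_pow_closed\<close>)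

lemma (in group) expr_action_closed:
  "formal_expr G \<alpha> \<Longrightarrow> g \<in> carrier G \<Longrightarrow> expr_action G \<alpha> g \<in> carrier G"
  by (induction \<alpha>) (auto simp: formal_expr_def hom_in_carrier)

lemma (in group_hom) hom_comp_expr_action:
  assumes comm: "\<And>x y. x \<in> carrier G \<Longrightarrow> y \<in> carrier G \<Longrightarrow> h x \<otimes>\<^bsub>H\<^esub> h y = h y \<otimes>\<^bsub>H\<^esub> h x"
    and "formal_expr G \<alpha>"
  shows "(\<lambda>g. h (expr_action G \<alpha> g)) \<in> hom G H"
  using assms(2)
proof (induction \<alpha>)
  case Nil
  then show ?case by (simp add: homI)
next
  case (Cons t \<alpha>)
  obtain n \<phi> where t: "t = (n, \<phi>)" by fastforce
  have \<phi>: "\<phi> \<in> hom G G" and \<alpha>: "formal_expr G \<alpha>"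
    using Cons.prems by (simp_all add: t formal_expr_def)
  have "(\<lambda>g. h (\<phi> (g [^] n))) \<in> hom G H"
    by (rule H.hom_comp_int_pow)
      (use \<phi> Group.hom_compose [OF \<phi> homh] in \<open>simp_all add: is_group hom_in_carrier comm comp_def\<close>)
  moreover have "(\<lambda>g. h (expr_action G \<alpha> g)) \<in> hom G H"
    using Cons.IH \<alpha> .
  ultimately have "(\<lambda>g. h (\<phi> (g [^] n)) \<otimes>\<^bsub>H\<^esub> h (expr_action G \<alpha> g)) \<in> hom G H"
    by (rule H.hom_pointwise_mult)
      (simp add: comm hom_in_carrier [OF \<phi>] G.expr_action_closed [OF \<alpha>])
  then show ?case
    by (rule G.hom_restrict)
      (use \<phi> \<alpha> in \<open>simp add: t hom_in_carrier G.expr_action_closed\<close>)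
qed

locale central_kernel_hom = group_hom G Q p
  for G :: "('a, 'b) monoid_scheme" (structure) and Q :: "('c, 'd) monoid_scheme" and p +
  assumes kernel_central: "kernel G Q p \<subseteq> group_center G"
begin

lemma conjugate_eq_if_hom_eq:
  assumes "p a = p b" and "a \<in> carrier G" "b \<in> carrier G" "x \<in> carrier G"
  shows "conjugate G a x = conjugate G b x"
proof -
  have "a \<otimes> inv b \<in> kernel G Q p"
    using assms by (simp add: kernel_def)
  then have central: "a \<otimes> inv b \<in> group_center G"
    using kernel_central by blast
  have "conjugate G a x = conjugate G ((a \<otimes> inv b) \<otimes> b) x"
    using assms by (simp add: G.m_assoc)
  also have "\<dots> = conjugate G b x"
    using assms central by (simp add: G.conjugate_mult G.conjugate_central)
  finally show ?thesis .
qed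

lemma hom_commute_if_commutator_in_kernel:
  assumes "u \<otimes> v \<otimes> inv u \<otimes> inv v \<in> kernel G Q p" and "u \<in> carrier G" "v \<in> carrier G"
  shows "p u \<otimes>\<^bsub>Q\<^esub> p v = p v \<otimes>\<^bsub>Q\<^esub> p u"
proof -
  let ?c = "u \<otimes> v \<otimes> inv u \<otimes> inv v"
  have "u \<otimes> v = ?c \<otimes> (v \<otimes> u)"
    using assms by (simp add: G.m_assoc) (simp add: G.m_assoc [symmetric])
  then have "p (u \<otimes> v) = p ?c \<otimes>\<^bsub>Q\<^esub> p (v \<otimes> u)"
    using assms by (metis hom_mult G.m_closed G.inv_closed)
  also have "\<dots> = p (v \<otimes> u)"
    using assms by (simp add: kernel_def)
  finally show ?thesis
    using assms by simp
qed

lemma hom_commute_if_commutator_subgroup_in_kernel: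
  assumes commutators: "commutator_subgroup G A B \<subseteq> kernel G Q p"
    and "A \<subseteq> carrier G" "B \<subseteq> carrier G" "x \<in> A" "y \<in> B"
  shows "p x \<otimes>\<^bsub>Q\<^esub> p y = p y \<otimes>\<^bsub>Q\<^esub> p x"
proof (rule hom_commute_if_commutator_in_kernel)
  have "x \<otimes> y \<otimes> inv x \<otimes> inv y \<in> commutator_subgroup G A B"
    unfolding commutator_subgroup_def by (rule generate.incl) (use assms in blast)
  then show "x \<otimes> y \<otimes> inv x \<otimes> inv y \<in> kernel G Q p"
    using commutators by blast
qed (use assms in blast)+

lemma hom_commute_if_derived_in_kernel:
  assumes \<psi>: "\<psi> \<in> hom G G" and derived: "\<psi> ` derived G (carrier G) \<subseteq> kernel G Q p"
    and x: "x \<in> carrier G" and y: "y \<in> carrier G"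
  shows "p (\<psi> x) \<otimes>\<^bsub>Q\<^esub> p (\<psi> y) = p (\<psi> y) \<otimes>\<^bsub>Q\<^esub> p (\<psi> x)"
proof (rule hom_commute_if_commutator_in_kernel)
  interpret \<psi>: group_hom G G \<psi>
    by unfold_locales (rule \<psi>)
  have "x \<otimes> y \<otimes> inv x \<otimes> inv y \<in> derived G (carrier G)"
    unfolding derived_def by (rule generate.incl) (use x y in blast)
  then have "\<psi> (x \<otimes> y \<otimes> inv x \<otimes> inv y) \<in> kernel G Q p"
    using derived by blast
  then show "\<psi> x \<otimes> \<psi> y \<otimes> inv \<psi> x \<otimes> inv \<psi> y \<in> kernel G Q p"
    using x y by simp
qed (use \<psi> x y in \<open>simp_all add: hom_in_carrier\<close>)

end

lemma (in group) central_kernel_hom_Mod_center: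
  "central_kernel_hom G (G Mod group_center G) (\<lambda>a. group_center G #> a)"
proof -
  interpret Z: normal "group_center G" G
    by (rule normal_group_center)
  show ?thesis
    unfolding central_kernel_hom_def central_kernel_hom_axioms_def group_hom_def group_hom_axioms_def
    by (simp add: is_group Z.factorgroup_is_group Z.r_coset_hom_Mod Z.kernel_r_coset_hom_Mod)
qed

locale twisting = central_kernel_hom +
  fixes f :: "'a \<Rightarrow> 'a"
  assumes twist_closed: "f \<in> carrier G \<rightarrow> carrier G"
    and twist_hom: "(\<lambda>g. p (f g)) \<in> hom G Q"
    and twist_commute:
      "g \<in> carrier G \<Longrightarrow> h \<in> carrier G \<Longrightarrow> p (f g) \<otimes>\<^bsub>Q\<^esub> p (f h) = p (f h) \<otimes>\<^bsub>Q\<^esub> p (f g)"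
begin

sublocale twist: group_hom G Q "\<lambda>g. p (f g)"
  by unfold_locales (rule twist_hom)

abbreviation twisted_group :: "'a monoid" where
  "twisted_group \<equiv> \<lparr>carrier = carrier G, monoid.mult = twisted_op G f, one = \<one>\<rparr>"

lemma twist_in_carrier [simp]: "g \<in> carrier G \<Longrightarrow> f g \<in> carrier G"
  using twist_closed by blast

lemma twisted_op_closed: "g \<in> carrier G \<Longrightarrow> h \<in> carrier G \<Longrightarrow> twisted_op G f g h \<in> carrier G"
  by (simp add: twisted_op_def)

lemma twist_conjugate:
  assumes "a \<in> carrier G" "h \<in> carrier G"
  shows "p (f (conjugate G a h)) = p (f h)"
proof -
  have "p (f (conjugate G a h)) = p (f a) \<otimes>\<^bsub>Q\<^esub> p (f h) \<otimes>\<^bsub>Q\<^esub> inv\<^bsub>Q\<^esub> p (f a)"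
    using assms by (simp add: conjugate_def)
  also have "\<dots> = p (f h) \<otimes>\<^bsub>Q\<^esub> p (f a) \<otimes>\<^bsub>Q\<^esub> inv\<^bsub>Q\<^esub> p (f a)"
    using assms by (simp add: twist_commute)
  also have "\<dots> = p (f h)"
    using assms by (simp add: H.m_assoc)
  finally show ?thesis .
qed

lemma twist_twisted_op:
  "g \<in> carrier G \<Longrightarrow> h \<in> carrier G \<Longrightarrow>
    p (f (twisted_op G f g h)) = p (f g) \<otimes>\<^bsub>Q\<^esub> p (f h)"
  by (simp add: G.twisted_op_conjugate twist_conjugate)

lemma conjugate_twist_twisted_op:
  "g \<in> carrier G \<Longrightarrow> h \<in> carrier G \<Longrightarrow> x \<in> carrier G \<Longrightarrow>
    conjugate G (f (twisted_op G f g h)) x = conjugate G (f g \<otimes> f h) x"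
  by (rule conjugate_eq_if_hom_eq) (simp_all add: twist_twisted_op twisted_op_closed)

lemma twisted_op_assoc:
  assumes "g \<in> carrier G" "h \<in> carrier G" "k \<in> carrier G"
  shows "twisted_op G f (twisted_op G f g h) k = twisted_op G f g (twisted_op G f h k)"
proof -
  have "twisted_op G f (twisted_op G f g h) k
      = g \<otimes> conjugate G (f g) h \<otimes> conjugate G (f (twisted_op G f g h)) k"
    using assms by (simp add: G.twisted_op_conjugate twisted_op_closed)
  also have "\<dots> = g \<otimes> conjugate G (f g) h \<otimes> conjugate G (f g) (conjugate G (f h) k)"
    using assms by (simp add: conjugate_twist_twisted_op G.conjugate_mult)
  also have "\<dots> = twisted_op G f g (twisted_op G f h k)"
    using assms by (simp add: G.twisted_op_conjugate G.conjugate_distrib G.m_assoc)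
  finally show ?thesis .
qed

lemma twisted_op_one_left: "x \<in> carrier G \<Longrightarrow> twisted_op G f \<one> x = x"
  using conjugate_eq_if_hom_eq[of "f \<one>" \<one> x] by (simp add: G.twisted_op_conjugate)

lemma twisted_op_inv_left:
  assumes g: "g \<in> carrier G"
  shows "twisted_op G f (conjugate G (inv (f g)) (inv g)) g = \<one>"
proof -
  let ?y = "conjugate G (inv (f g)) (inv g)"
  have "p (f ?y) = p (inv (f g))"
    using g by (simp add: twist_conjugate)
  then have "twisted_op G f ?y g = ?y \<otimes> conjugate G (inv (f g)) g"
    using g by (simp add: G.twisted_op_conjugate conjugate_eq_if_hom_eq)
  also have "\<dots> = \<one>"
    using g by (simp add: G.conjugate_inv)
  finally show ?thesis .
qed

lemma twisted_group_is_group: "group twisted_group"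
proof (rule groupI)
  fix x assume "x \<in> carrier twisted_group"
  then show "\<exists>y \<in> carrier twisted_group. y \<otimes>\<^bsub>twisted_group\<^esub> x = \<one>\<^bsub>twisted_group\<^esub>"
    using twisted_op_inv_left by force
qed (simp_all add: twisted_op_closed twisted_op_assoc twisted_op_one_left)

lemma twisted_group_inv:
  "g \<in> carrier G \<Longrightarrow> inv\<^bsub>twisted_group\<^esub> g = conjugate G (inv (f g)) (inv g)"
  using group.inv_equality[OF twisted_group_is_group] twisted_op_inv_left by force

end

locale twisting_pair = F: twisting G Q p f + K: twisting G Q p k
  for G :: "('a, 'b) monoid_scheme" (structure) and Q :: "('c, 'd) monoid_scheme" and p f k +
  assumes twists_commute:
    "g \<in> carrier G \<Longrightarrow> h \<in> carrier G \<Longrightarrow> p (k g) \<otimes>\<^bsub>Q\<^esub> p (f h) = p (f h) \<otimes>\<^bsub>Q\<^esub> p (k g)"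
begin

lemma twisted_op_twisted_inv:
  assumes abc: "a \<in> carrier G" "b \<in> carrier G"
  defines "w \<equiv> twisted_op G f (twisted_op G k a b) (inv\<^bsub>F.twisted_group\<^esub> a)"
  shows "w = a \<otimes> conjugate G (k a) b \<otimes> conjugate G (f b) (inv a)"
    and "p (f w) = p (f b)"
proof -
  let ?x = "twisted_op G k a b" and ?a' = "inv\<^bsub>F.twisted_group\<^esub> a"
  have x: "?x = a \<otimes> conjugate G (k a) b" and x_closed: "?x \<in> carrier G"
    using abc by (simp_all add: F.G.twisted_op_conjugate K.twisted_op_closed)
  have a': "?a' = conjugate G (inv (f a)) (inv a)" and a'_closed: "?a' \<in> carrier G"
    using abc by (simp_all add: F.twisted_group_inv)
  have "conjugate G (f ?x) ?a' = conjugate G (f b \<otimes> f a) ?a'"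
    by (rule F.conjugate_eq_if_hom_eq)
      (use abc a'_closed in \<open>simp_all add: x F.twist_conjugate F.twist_commute\<close>)
  then have "w = ?x \<otimes> conjugate G (f b \<otimes> f a) ?a'"
    using x_closed a'_closed by (simp add: w_def F.G.twisted_op_conjugate)
  also have "\<dots> = ?x \<otimes> conjugate G (f b) (inv a)"
    using abc by (simp add: a' F.G.conjugate_mult F.G.conjugate_conjugate_inv)
  finally show "w = a \<otimes> conjugate G (k a) b \<otimes> conjugate G (f b) (inv a)"
    by (simp add: x)
  have "p (f w) = p (f a) \<otimes>\<^bsub>Q\<^esub> p (f b) \<otimes>\<^bsub>Q\<^esub> inv\<^bsub>Q\<^esub> p (f a)"
    using abc x_closed by (simp add: w_def F.twist_twisted_op a' F.twist_conjugate x)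
  also have "\<dots> = p (f b) \<otimes>\<^bsub>Q\<^esub> p (f a) \<otimes>\<^bsub>Q\<^esub> inv\<^bsub>Q\<^esub> p (f a)"
    using abc by (simp add: F.twist_commute)
  also have "\<dots> = p (f b)"
    using abc by (simp add: F.H.m_assoc)
  finally show "p (f w) = p (f b)" .
qed

theorem skew_left_brace_twisted_ops:
  "skew_left_brace (carrier G) (twisted_op G f) (twisted_op G k)"
  unfolding skew_left_brace_def
proof (intro exI conjI ballI)
  show "group F.twisted_group" "group K.twisted_group"
    by (rule F.twisted_group_is_group K.twisted_group_is_group)+
  fix a b c assume abc: "a \<in> carrier G" "b \<in> carrier G" "c \<in> carrier G"
  let ?w = "twisted_op G f (twisted_op G k a b) (inv\<^bsub>F.twisted_group\<^esub> a)"
  have w_closed: "?w \<in> carrier G"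
    using abc by (simp add: F.twisted_op_closed K.twisted_op_closed F.twisted_group_inv)
  have "twisted_op G k a (twisted_op G f b c)
      = a \<otimes> conjugate G (k a) b \<otimes> conjugate G (k a) (conjugate G (f b) c)"
    using abc by (simp add: F.G.twisted_op_conjugate F.twisted_op_closed F.G.conjugate_distrib F.G.m_assoc)
  also have "\<dots> = a \<otimes> conjugate G (k a) b \<otimes> conjugate G (f b) (conjugate G (k a) c)"
  proof -
    have "conjugate G (k a \<otimes> f b) c = conjugate G (f b \<otimes> k a) c"
      by (rule F.conjugate_eq_if_hom_eq) (use abc twists_commute in simp_all)
    then show ?thesis
      using abc by (simp add: F.G.conjugate_mult)
  qed
  also have "\<dots> = ?w \<otimes> conjugate G (f b) (a \<otimes> conjugate G (k a) c)"
    using abc by (simp add: twisted_op_twisted_inv(1) F.G.conjugate_distrib F.G.conjugate_inv F.G.m_assoc)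
      (simp add: F.G.m_assoc [symmetric])
  also have "\<dots> = twisted_op G f ?w (twisted_op G k a c)"
    using abc w_closed F.conjugate_eq_if_hom_eq [OF twisted_op_twisted_inv(2)]
    by (simp add: F.G.twisted_op_conjugate K.twisted_op_closed)
  finally show "twisted_op G k a (twisted_op G f b c) = twisted_op G f ?w (twisted_op G k a c)" .
qed

end

context central_kernel_hom
begin

lemma twisting_comp_expr_action:
  assumes \<psi>: "\<psi> \<in> hom G G" and derived: "\<psi> ` derived G (carrier G) \<subseteq> kernel G Q p"
    and \<alpha>: "formal_expr G \<alpha>"
  shows "twisting G Q p (\<psi> \<circ> expr_action G \<alpha>)"
proof (intro twisting.intro twisting_axioms.intro)
  interpret p\<psi>: group_hom G Q "\<lambda>x. p (\<psi> x)"
    by unfold_locales (use Group.hom_compose [OF \<psi> homh] in \<open>simp add: comp_def\<close>)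
  show "central_kernel_hom G Q p"
    by intro_locales
  show "\<psi> \<circ> expr_action G \<alpha> \<in> carrier G \<rightarrow> carrier G"
    using \<psi> \<alpha> by (simp add: hom_in_carrier G.expr_action_closed)
  show "(\<lambda>g. p ((\<psi> \<circ> expr_action G \<alpha>) g)) \<in> hom G Q"
    using p\<psi>.hom_comp_expr_action [OF hom_commute_if_derived_in_kernel [OF \<psi> derived] \<alpha>]
    by (simp add: comp_def)
  show "p ((\<psi> \<circ> expr_action G \<alpha>) g) \<otimes>\<^bsub>Q\<^esub> p ((\<psi> \<circ> expr_action G \<alpha>) h) =
      p ((\<psi> \<circ> expr_action G \<alpha>) h) \<otimes>\<^bsub>Q\<^esub> p ((\<psi> \<circ> expr_action G \<alpha>) g)"
    if "g \<in> carrier G" "h \<in> carrier G" for g h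
    using that \<alpha> by (simp add: hom_commute_if_derived_in_kernel [OF \<psi> derived] G.expr_action_closed)
qed

lemma twisting_pair_comp_expr_action:
  assumes \<psi>: "\<psi> \<in> hom G G" and \<psi>': "\<psi>' \<in> hom G G"
    and "\<psi> ` derived G (carrier G) \<subseteq> kernel G Q p" "\<psi>' ` derived G (carrier G) \<subseteq> kernel G Q p"
    and commutators: "commutator_subgroup G (\<psi> ` carrier G) (\<psi>' ` carrier G) \<subseteq> kernel G Q p"
    and \<alpha>: "formal_expr G \<alpha>" and \<beta>: "formal_expr G \<beta>"
  shows "twisting_pair G Q p (\<psi> \<circ> expr_action G \<alpha>) (\<psi>' \<circ> expr_action G \<beta>)"
proof (intro twisting_pair.intro twisting_pair_axioms.intro)
  show "twisting G Q p (\<psi> \<circ> expr_action G \<alpha>)" "twisting G Q p (\<psi>' \<circ> expr_action G \<beta>)"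
    using assms by (simp_all add: twisting_comp_expr_action)
  fix g h assume "g \<in> carrier G" "h \<in> carrier G"
  then have "p (\<psi> (expr_action G \<alpha> h)) \<otimes>\<^bsub>Q\<^esub> p (\<psi>' (expr_action G \<beta> g))
      = p (\<psi>' (expr_action G \<beta> g)) \<otimes>\<^bsub>Q\<^esub> p (\<psi> (expr_action G \<alpha> h))"
    by (intro hom_commute_if_commutator_subgroup_in_kernel [OF commutators])
      (use \<psi> \<psi>' \<alpha> \<beta> in \<open>auto simp: hom_in_carrier G.expr_action_closed\<close>)
  then show "p ((\<psi>' \<circ> expr_action G \<beta>) g) \<otimes>\<^bsub>Q\<^esub> p ((\<psi> \<circ> expr_action G \<alpha>) h)
      = p ((\<psi> \<circ> expr_action G \<alpha>) h) \<otimes>\<^bsub>Q\<^esub> p ((\<psi>' \<circ> expr_action G \<beta>) g)"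
    by simp
qed

end

theorem theorem3p3:
  fixes G :: "('a, 'b) monoid_scheme"
    and \<psi> \<psi>' :: "'a \<Rightarrow> 'a"
    and \<alpha> \<beta> :: "(int \<times> ('a \<Rightarrow> 'a)) list"
  assumes "group G"
    and "\<not> comm_group G"
    and "\<psi> \<in> hom G G" and "\<psi>' \<in> hom G G"
    and "\<psi> ` derived G (carrier G) \<subseteq> group_center G"
    and "\<psi>' ` derived G (carrier G) \<subseteq> group_center G"
    and "commutator_subgroup G (\<psi> ` carrier G) (\<psi>' ` carrier G) \<subseteq> group_center G"
    and "formal_expr G \<alpha>" and "formal_expr G \<beta>"
  shows "skew_left_brace (carrier G)
           (twisted_op G (\<psi> \<circ> expr_action G \<alpha>))
           (twisted_op G (\<psi>' \<circ> expr_action G \<beta>))"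
proof -
  interpret central_kernel_hom G "G Mod group_center G" "\<lambda>a. group_center G #>\<^bsub>G\<^esub> a"
    by (rule group.central_kernel_hom_Mod_center) fact
  have "kernel G (G Mod group_center G) (\<lambda>a. group_center G #>\<^bsub>G\<^esub> a) = group_center G"
    by (rule normal.kernel_r_coset_hom_Mod [OF G.normal_group_center])
  then interpret twisting_pair G "G Mod group_center G" "\<lambda>a. group_center G #>\<^bsub>G\<^esub> a"
      "\<psi> \<circ> expr_action G \<alpha>" "\<psi>' \<circ> expr_action G \<beta>"
    using assms(3-9) by (simp add: twisting_pair_comp_expr_action)
  show ?thesis
    by (rule skew_left_brace_twisted_ops)
qed

end
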